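(* Let $n\geq5$ and let $M$ be a Lagrangian submanifold of a complex space form $\tilde M^n(4c)$ such that at a point $p\in M$ equality holds in $\delta(2,n-2)\leq\frac{n^2(n-2)}{4(n-1)}H^2+2(n-2)c$. Then there exist an orthonormal basis $\{e_1,\ldots,e_n\}$ of $T_pM$ and real numbers $\gamma,\lambda,\mu$ and $h^k_{ij}$ ($i,j,k\ge3$) such that $$h(e_1,e_1)=\gamma Je_1,\quad h(e_1,e_2)=(n\lambda-\gamma)Je_2,\quad h(e_2,e_2)=(n\lambda-\gamma)Je_1+n\mu Je_2,$$ $$h(e_1,e_i)=\lambda Je_i,\quad h(e_2,e_i)=\mu Je_i,\quad h(e_i,e_j)=\delta_{ij}(\lambda Je_1+\mu Je_2)+\sum_{k=3}^nh^k_{ij}Je_k$$ for $i,j\ge3$, where the $h^k_{ij}$ are symmetric in the three indices and $h^k_{33}+\cdots+h^k_{nn}=0$ for every $k\ge3$. Moreover $\gamma\ge0$ and $\gamma\ge\frac{2n}{3}\lambda$; if $\gamma=0$ then $\lambda=\mu=0$; and if $\gamma>0$ then $\gamma>\frac n2\lambda$.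
   Context: A complex space form $\tilde M^n(4c)$ is a Kähler manifold of complex dimension $n$ with complex structure $J$ and constant holomorphic sectional curvature $4c$. A real $n$-dimensional submanifold $M$ is Lagrangian if $J$ maps each $T_pM$ onto the normal space. $h$ is the second fundamental form, $H=\frac1n\operatorname{trace}h$, $H^2=\langle H,H\rangle$. For $L\subseteq T_pM$ of dimension $r\ge2$ with orthonormal basis $e_1,\ldots,e_r$, $\tau(L)=\sum_{\alpha<\beta}K(e_\alpha\wedge e_\beta)$ ($K$ the sectional curvature of $M$), $\tau(p)=\tau(T_pM)$, and $\delta(2,n-2)(p)=\tau(p)-\inf\{\tau(L_1)+\tau(L_2)\}$ over mutually orthogonal subspaces $L_1,L_2\subseteq T_pM$ with $\dim L_1=2$, $\dim L_2=n-2$. *)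

theory Defs
  imports "HOL-Analysis.Analysis"
begin

text \<open>Pointwise model of a Lagrangian submanifold M^n of a complex space form of
holomorphic sectional curvature 4c at a point p.  T_pM is modelled by real^'n
(n = CARD('n)), and the normal space J(T_pM) is identified with T_pM via J:
the second fundamental form is written h(X,Y) = J (sff X Y).  The Lagrangian
condition says that the cubic form <h(X,Y),JZ> = <sff X Y, Z> is totally symmetric.\<close>

definition lagrangian_sff :: "(real^'n \<Rightarrow> real^'n \<Rightarrow> real^'n) \<Rightarrow> bool" where
  "lagrangian_sff sff \<longleftrightarrow> bilinear sff \<and> (\<forall>x y. sff x y = sff y x)
     \<and> (\<forall>x y z. inner (sff x y) z = inner (sff x z) y)"

text \<open>Sectional curvature of the plane spanned by orthonormal u, v, via the Gauss
equation (ambient curvature c on totally real planes; J is an isometry).\<close>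
definition sec_curv :: "real \<Rightarrow> (real^'n \<Rightarrow> real^'n \<Rightarrow> real^'n) \<Rightarrow> real^'n \<Rightarrow> real^'n \<Rightarrow> real" where
  "sec_curv c sff u v = c + inner (sff u u) (sff v v) - (norm (sff u v))^2"

definition orthonormal_basis_of :: "(real^'n) set \<Rightarrow> (nat \<Rightarrow> real^'n) \<Rightarrow> nat \<Rightarrow> bool" where
  "orthonormal_basis_of L e r \<longleftrightarrow> (\<forall>i<r. e i \<in> L)
     \<and> (\<forall>i<r. \<forall>j<r. inner (e i) (e j) = (if i = j then 1 else 0))
     \<and> span (e ` {..<r}) = L"

definition tau_basis :: "real \<Rightarrow> (real^'n \<Rightarrow> real^'n \<Rightarrow> real^'n) \<Rightarrow> (nat \<Rightarrow> real^'n) \<Rightarrow> nat \<Rightarrow> real" where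
  "tau_basis c sff e r = (\<Sum>b<r. \<Sum>a<b. sec_curv c sff (e a) (e b))"

text \<open>tau(L): computed with an orthonormal basis of L (the value is basis independent).\<close>
definition tau_sub :: "real \<Rightarrow> (real^'n \<Rightarrow> real^'n \<Rightarrow> real^'n) \<Rightarrow> (real^'n) set \<Rightarrow> real" where
  "tau_sub c sff L = (SOME t. \<exists>e. orthonormal_basis_of L e (dim L) \<and> t = tau_basis c sff e (dim L))"

definition delta_2_nm2 :: "real \<Rightarrow> (real^'n \<Rightarrow> real^'n \<Rightarrow> real^'n) \<Rightarrow> real" where
  "delta_2_nm2 c sff = tau_sub c sff (UNIV :: (real^'n) set)
     - Inf {tau_sub c sff L1 + tau_sub c sff L2 | L1 L2.
              subspace L1 \<and> subspace L2 \<and> dim L1 = 2 \<and> dim L2 = CARD('n) - 2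
              \<and> (\<forall>x\<in>L1. \<forall>y\<in>L2. inner x y = 0)}"

text \<open>Mean curvature vector (pulled back by J^{-1}); |H|^2 is unaffected.\<close>
definition mean_curv :: "(real^'n \<Rightarrow> real^'n \<Rightarrow> real^'n) \<Rightarrow> real^'n" where
  "mean_curv sff = (1 / real CARD('n)) *\<^sub>R (\<Sum>i\<in>UNIV. sff (axis i 1) (axis i 1))"

end

theory Submission
  imports Defs
begin

text \<open>Every admissible pair (L1, L2) is spanned by the first two and the last n-2 vectors of an
  orthonormal frame e_1, ..., e_n, and then tau(T_pM) - tau(L1) - tau(L2) is the mixed curvature,
  the sum of K(e_a, e_b) over a <= 2 < b.  By compactness of the set of frames, delta(2,n-2) is the
  maximum of the mixed curvature.  Rotating e_1, e_2 inside L1 does not change it, so e_1 may be taken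
  to maximise the cubic form v \<mapsto> <h(v,v), Jv> on the unit circle of L1; the first and second
  order conditions give h^2_11 = 0 and h^1_11 >= 2 h^2_12, and h^1_11 >= 0.  By the Gauss equation,
  Chen's bound minus the mixed curvature is a sum of squares in the coefficients
  h^r_ab = <h(e_a,e_b), Je_r> (the weights are positive exactly because n >= 5), so at equality every
  square vanishes, and this is the stated normal form.\<close>

definition orthonormal_frame :: "(nat \<Rightarrow> real^'n) \<Rightarrow> nat \<Rightarrow> bool" where
  "orthonormal_frame g r \<longleftrightarrow> (\<forall>i<r. \<forall>j<r. inner (g i) (g j) = (if i = j then 1 else 0))"

lemma orthonormal_frame_independent:
  assumes "orthonormal_frame g r"
  shows "independent (g ` {..<r})"
proof (rule pairwise_orthogonal_independent)
  show "pairwise orthogonal (g ` {..<r})"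
    using assms unfolding orthonormal_frame_def pairwise_def orthogonal_def by auto
  show "0 \<notin> g ` {..<r}"
    using assms unfolding orthonormal_frame_def by force
qed

lemma card_image_orthonormal_frame:
  assumes "orthonormal_frame g r"
  shows "card (g ` {..<r}) = r"
proof -
  have "inj_on g {..<r}"
    using assms unfolding orthonormal_frame_def inj_on_def by (metis lessThan_iff zero_neq_one)
  then show ?thesis
    by (simp add: card_image)
qed

lemma dim_span_orthonormal_frame: "orthonormal_frame g r \<Longrightarrow> dim (span (g ` {..<r})) = r"
  by (metis dim_span_eq_card_independent orthonormal_frame_independent card_image_orthonormal_frame)

lemma orthonormal_frame_take2: "orthonormal_frame f (2 + m) \<Longrightarrow> orthonormal_frame f 2"
  by (simp add: orthonormal_frame_def)

lemma orthonormal_frame_drop2: "orthonormal_frame f (2 + m) \<Longrightarrow> orthonormal_frame (\<lambda>j. f (j + 2)) m"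
  by (simp add: orthonormal_frame_def)

lemma orthonormal_frame_expansion:
  assumes g: "orthonormal_frame g r" and x: "x \<in> span (g ` {..<r})"
  shows "x = (\<Sum>a<r. inner x (g a) *\<^sub>R g a)"
proof -
  define y where "y = x - (\<Sum>a<r. inner x (g a) *\<^sub>R g a)"
  have y_span: "y \<in> span (g ` {..<r})"
    unfolding y_def by (intro span_diff x span_sum span_scale span_base) auto
  have "inner y (g b) = 0" if "b < r" for b
  proof -
    have "inner (\<Sum>a<r. inner x (g a) *\<^sub>R g a) (g b) = (\<Sum>a<r. inner x (g a) * (if a = b then 1 else 0))"
      using g that by (simp add: inner_sum_left orthonormal_frame_def)
    also have "\<dots> = inner x (g b)"
      using that by (simp add: if_distrib cong: if_cong)
    finally show ?thesis
      by (simp add: y_def inner_diff_left)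
  qed
  then have "orthogonal y y"
    by (intro orthogonal_to_span[OF y_span]) (auto simp: orthogonal_def)
  then show ?thesis
    by (simp add: y_def orthogonal_def)
qed

lemma orthonormal_frame_inner:
  assumes "orthonormal_frame g r" and "x \<in> span (g ` {..<r})"
  shows "inner x y = (\<Sum>a<r. inner x (g a) * inner y (g a))"
proof -
  have "inner x y = inner (\<Sum>a<r. inner x (g a) *\<^sub>R g a) y"
    using orthonormal_frame_expansion[OF assms] by simp
  also have "\<dots> = (\<Sum>a<r. inner x (g a) * inner (g a) y)"
    by (simp add: inner_sum_left)
  finally show ?thesis
    by (simp add: inner_commute)
qed

lemma span_orthonormal_frame_UNIV:
  assumes "orthonormal_frame (f :: nat \<Rightarrow> real^'n) CARD('n)"
  shows "span (f ` {..<CARD('n)}) = UNIV"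
proof -
  have "UNIV \<subseteq> span (f ` {..<CARD('n)})"
    using orthonormal_frame_independent[OF assms] card_image_orthonormal_frame[OF assms]
    by (intro card_ge_dim_independent) auto
  then show ?thesis
    by auto
qed

lemma bilinear_trace_orthonormal_frame:
  fixes \<beta> :: "real^'n \<Rightarrow> real^'n \<Rightarrow> 'c::real_vector"
  assumes \<beta>: "bilinear \<beta>" and g: "orthonormal_frame g r" and g': "orthonormal_frame g' r"
    and same_span: "span (g ` {..<r}) = span (g' ` {..<r})"
  shows "(\<Sum>a<r. \<beta> (g a) (g a)) = (\<Sum>a<r. \<beta> (g' a) (g' a))"
proof -
  have g_in: "g a \<in> span (g' ` {..<r})" and g'_in: "g' a \<in> span (g ` {..<r})" if "a < r" for a
    using same_span that by (metis image_eqI lessThan_iff span_base)+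
  have "(\<Sum>a<r. \<beta> (g a) (g a))
      = (\<Sum>a<r. \<Sum>b<r. \<Sum>b'<r. (inner (g a) (g' b) * inner (g a) (g' b')) *\<^sub>R \<beta> (g' b) (g' b'))"
  proof (rule sum.cong[OF refl])
    fix a assume "a \<in> {..<r}"
    then have "\<beta> (g a) (g a) = \<beta> (\<Sum>b<r. inner (g a) (g' b) *\<^sub>R g' b) (\<Sum>b<r. inner (g a) (g' b) *\<^sub>R g' b)"
      using orthonormal_frame_expansion[OF g' g_in] by simp
    then show "\<beta> (g a) (g a) = (\<Sum>b<r. \<Sum>b'<r. (inner (g a) (g' b) * inner (g a) (g' b')) *\<^sub>R \<beta> (g' b) (g' b'))"
      by (simp add: bilinear_sum[OF \<beta>] sum.cartesian_product bilinear_lmul[OF \<beta>] bilinear_rmul[OF \<beta>] mult.commute)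
  qed
  also have "\<dots> = (\<Sum>b<r. \<Sum>b'<r. \<Sum>a<r. (inner (g a) (g' b) * inner (g a) (g' b')) *\<^sub>R \<beta> (g' b) (g' b'))"
    by (subst sum.swap) (rule sum.cong[OF refl], rule sum.swap)
  also have "\<dots> = (\<Sum>b<r. \<Sum>b'<r. (\<Sum>a<r. inner (g' b) (g a) * inner (g' b') (g a)) *\<^sub>R \<beta> (g' b) (g' b'))"
    by (simp add: scaleR_sum_left inner_commute)
  also have "\<dots> = (\<Sum>b<r. \<Sum>b'<r. inner (g' b) (g' b') *\<^sub>R \<beta> (g' b) (g' b'))"
    using orthonormal_frame_inner[OF g g'_in] by simp
  also have "\<dots> = (\<Sum>a<r. \<beta> (g' a) (g' a))"
    using g' by (simp add: orthonormal_frame_def if_distrib[of "\<lambda>t. t *\<^sub>R _"] sum.delta cong: if_cong)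
  finally show ?thesis .
qed

lemma sum_lessThan_add:
  fixes G :: "nat \<Rightarrow> 'a::comm_monoid_add"
  shows "(\<Sum>a<k + m. G a) = (\<Sum>a<k. G a) + (\<Sum>a<m. G (a + k))"
  by (induction m) (auto simp: ac_simps)

lemma sum_lessThan_2: "(\<Sum>a<2::nat. G a) = G 0 + G 1"
  by (simp add: numeral_2_eq_2)

lemma sum_lessThan_2_add: "(\<Sum>a<2 + m. G a) = G 0 + G 1 + (\<Sum>a<m. G (a + 2::nat))"
  by (subst sum_lessThan_add) (simp add: sum_lessThan_2)

lemma sum_delta_scaleR:
  fixes v :: "nat \<Rightarrow> 'a::real_vector"
  shows "finite A \<Longrightarrow> (\<Sum>k\<in>A. (if i = k then c else 0) *\<^sub>R v k) = (if i \<in> A then c *\<^sub>R v i else 0)"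
  by (simp add: if_distrib[of "\<lambda>t. t *\<^sub>R _"] sum.delta cong: if_cong)

lemma sum_lessThan_shift2:
  fixes G :: "nat \<Rightarrow> 'a::comm_monoid_add"
  shows "(\<Sum>a<m. G (a + 2)) = (\<Sum>a\<in>{2..<2 + m}. G a)"
  using sum.shift_bounds_nat_ivl[of G 0 2 m]
  by (simp add: atLeast0LessThan add.commute del: add_2_eq_Suc add_2_eq_Suc')

lemma sum_atLeastAtMost_3_shift:
  fixes G :: "nat \<Rightarrow> 'a::comm_monoid_add"
  shows "(\<Sum>k=3..b. G k) = (\<Sum>k\<in>{2..<b}. G (Suc k))"
proof -
  have three: "3 = Suc 2"
    by simp
  show ?thesis
    unfolding three atLeastLessThanSuc_atLeastAtMost[symmetric] sum.shift_bounds_Suc_ivl ..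
qed

lemma double_sum_lower_triangle:
  fixes F :: "nat \<Rightarrow> nat \<Rightarrow> real"
  assumes sym: "\<And>a b. F a b = F b a"
  shows "2 * (\<Sum>b<r. \<Sum>a<b. F a b) = (\<Sum>a<r. \<Sum>b<r. F a b) - (\<Sum>a<r. F a a)"
proof (induction r)
  case (Suc r)
  have "(\<Sum>a<Suc r. \<Sum>b<Suc r. F a b) = (\<Sum>a<r. \<Sum>b<r. F a b) + (\<Sum>a<r. F a r) + (\<Sum>b<r. F r b) + F r r"
    by (simp add: sum.distrib)
  also have "(\<Sum>b<r. F r b) = (\<Sum>a<r. F a r)"
    using sym by (intro sum.cong) auto
  finally show ?case
    using Suc by simp
qed simp

lemma lower_triangle_sum_split:
  fixes F :: "nat \<Rightarrow> nat \<Rightarrow> real"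
  shows "(\<Sum>b<k + m. \<Sum>a<b. F a b)
    = (\<Sum>b<k. \<Sum>a<b. F a b) + (\<Sum>b<m. \<Sum>a<b. F (a + k) (b + k)) + (\<Sum>a<k. \<Sum>b<m. F a (b + k))"
proof (induction m)
  case (Suc m)
  have "(\<Sum>a<k + m. F a (k + m)) = (\<Sum>a<k. F a (m + k)) + (\<Sum>a<m. F (a + k) (m + k))"
    by (subst sum_lessThan_add) (simp add: add.commute)
  then show ?case
    using Suc by (simp add: sum.distrib)
qed simp

section \<open>Scalar curvature of a subspace\<close>

lemma lagrangian_sff_bilinear: "lagrangian_sff sff \<Longrightarrow> bilinear sff"
  by (simp add: lagrangian_sff_def)

lemma lagrangian_sff_commute: "lagrangian_sff sff \<Longrightarrow> sff x y = sff y x"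
  by (simp add: lagrangian_sff_def)

lemma lagrangian_sff_inner_swap: "lagrangian_sff sff \<Longrightarrow> inner (sff x y) z = inner (sff x z) y"
  by (simp add: lagrangian_sff_def)

lemma double_tau_basis_eq:
  assumes lag: "lagrangian_sff sff"
  shows "2 * tau_basis c sff g r = real r * real r * c - real r * c
     + (norm (\<Sum>a<r. sff (g a) (g a)))^2 - (\<Sum>a<r. \<Sum>b<r. (norm (sff (g a) (g b)))^2)"
proof -
  let ?K = "\<lambda>a b. sec_curv c sff (g a) (g b)"
  have "2 * tau_basis c sff g r = (\<Sum>a<r. \<Sum>b<r. ?K a b) - (\<Sum>a<r. ?K a a)"
    unfolding tau_basis_def
    by (rule double_sum_lower_triangle) (simp add: sec_curv_def lagrangian_sff_commute[OF lag] inner_commute)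
  also have "(\<Sum>a<r. ?K a a) = real r * c"
    by (simp add: sec_curv_def power2_norm_eq_inner)
  also have "(\<Sum>a<r. \<Sum>b<r. ?K a b) = (\<Sum>a<r. \<Sum>b<r. c)
      + (\<Sum>a<r. \<Sum>b<r. inner (sff (g a) (g a)) (sff (g b) (g b))) - (\<Sum>a<r. \<Sum>b<r. (norm (sff (g a) (g b)))^2)"
    by (simp add: sec_curv_def sum.distrib sum_subtractf)
  also have "(\<Sum>a<r. \<Sum>b<r. inner (sff (g a) (g a)) (sff (g b) (g b))) = (norm (\<Sum>a<r. sff (g a) (g a)))^2"
    by (simp add: power2_norm_eq_inner inner_sum_left inner_sum_right, rule sum.swap)
  finally show ?thesis
    by simp
qed

lemma tau_basis_frame_invariant:
  assumes lag: "lagrangian_sff sff" and g: "orthonormal_frame g r" and g': "orthonormal_frame g' r"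
    and same_span: "span (g ` {..<r}) = span (g' ` {..<r})"
  shows "tau_basis c sff g r = tau_basis c sff g' r"
proof -
  note trace_eq = bilinear_trace_orthonormal_frame[OF _ g g' same_span]
  have sff_bilinear: "bilinear sff"
    using lag by (rule lagrangian_sff_bilinear)
  have "bilinear (\<lambda>y z. inner (sff x y) (sff x z))" for x
    using sff_bilinear unfolding bilinear_def linear_iff
    by (auto simp: bilinear_radd bilinear_rmul inner_add_left inner_add_right)
  then have row: "(\<Sum>b<r. (norm (sff x (g b)))^2) = (\<Sum>b<r. (norm (sff x (g' b)))^2)" for x
    using trace_eq unfolding power2_norm_eq_inner by blast
  have swap: "(\<Sum>a<r. \<Sum>b<r. (norm (sff (h a) (k b)))^2) = (\<Sum>a<r. \<Sum>b<r. (norm (sff (k a) (h b)))^2)"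
    for h k
    by (subst sum.swap) (simp add: lagrangian_sff_commute[OF lag])
  have "(\<Sum>a<r. \<Sum>b<r. (norm (sff (g a) (g b)))^2) = (\<Sum>a<r. \<Sum>b<r. (norm (sff (g' a) (g' b)))^2)"
    using swap[of g g'] by (simp only: row)
  then show ?thesis
    using double_tau_basis_eq[OF lag, of c g r] double_tau_basis_eq[OF lag, of c g' r] trace_eq[OF sff_bilinear] by simp
qed

lemma tau_sub_span_frame:
  assumes lag: "lagrangian_sff sff" and g: "orthonormal_frame g r"
  shows "tau_sub c sff (span (g ` {..<r})) = tau_basis c sff g r"
proof -
  let ?L = "span (g ` {..<r})"
  have dim: "dim ?L = r"
    using g by (rule dim_span_orthonormal_frame)
  have "orthonormal_basis_of ?L g (dim ?L)"
    using g unfolding orthonormal_basis_of_def orthonormal_frame_def dim by (auto intro: span_base)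
  then have "\<exists>e. orthonormal_basis_of ?L e (dim ?L) \<and> tau_sub c sff ?L = tau_basis c sff e (dim ?L)"
    unfolding tau_sub_def by (intro someI_ex[where P = "\<lambda>t. \<exists>e. _ e \<and> t = _ e"]) blast
  then obtain e where e: "orthonormal_basis_of ?L e r" and tau: "tau_sub c sff ?L = tau_basis c sff e r"
    unfolding dim by blast
  have "orthonormal_frame e r" and "span (e ` {..<r}) = ?L"
    using e unfolding orthonormal_basis_of_def orthonormal_frame_def by blast+
  then show ?thesis
    using tau tau_basis_frame_invariant[OF lag _ g] by simp
qed

section \<open>Reduction of delta(2,n-2) to a maximum over frames\<close>

definition mixed_curv :: "real \<Rightarrow> (real^'n \<Rightarrow> real^'n \<Rightarrow> real^'n) \<Rightarrow> (nat \<Rightarrow> real^'n) \<Rightarrow> nat \<Rightarrow> real" where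
  "mixed_curv c sff f m = (\<Sum>a<2. \<Sum>b<m. sec_curv c sff (f a) (f (b + 2)))"

lemma tau_sub_split_frame:
  fixes f :: "nat \<Rightarrow> real^'n"
  assumes lag: "lagrangian_sff sff" and n: "CARD('n) = 2 + m" and f: "orthonormal_frame f (2 + m)"
  shows "tau_sub c sff UNIV
      = tau_sub c sff (span (f ` {..<2})) + tau_sub c sff (span ((\<lambda>j. f (j + 2)) ` {..<m})) + mixed_curv c sff f m"
proof -
  have "tau_sub c sff UNIV = tau_basis c sff f (2 + m)"
    using tau_sub_span_frame[OF lag f] span_orthonormal_frame_UNIV[of f] f n by simp
  also have "\<dots> = tau_basis c sff f 2 + tau_basis c sff (\<lambda>j. f (j + 2)) m + mixed_curv c sff f m"
    unfolding tau_basis_def mixed_curv_def by (rule lower_triangle_sum_split)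
  finally show ?thesis
    using tau_sub_span_frame[OF lag orthonormal_frame_take2[OF f]]
      tau_sub_span_frame[OF lag orthonormal_frame_drop2[OF f]] by simp
qed

definition admissible_pair :: "(real^'n) set \<Rightarrow> (real^'n) set \<Rightarrow> bool" where
  "admissible_pair L1 L2 \<longleftrightarrow> subspace L1 \<and> subspace L2 \<and> dim L1 = 2 \<and> dim L2 = CARD('n) - 2
     \<and> (\<forall>x\<in>L1. \<forall>y\<in>L2. inner x y = 0)"

lemma delta_2_nm2_admissible_pairs:
  "delta_2_nm2 c sff
     = tau_sub c sff UNIV - Inf {tau_sub c sff L1 + tau_sub c sff L2 | L1 L2. admissible_pair L1 L2}"
  by (simp add: delta_2_nm2_def admissible_pair_def)

lemma inner_span_orthogonal:
  assumes "\<And>u v. u \<in> A \<Longrightarrow> v \<in> B \<Longrightarrow> inner u v = 0" and "x \<in> span A" and "y \<in> span B"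
  shows "inner x y = 0"
proof -
  have "orthogonal u y" if "u \<in> A" for u
    using orthogonal_to_span[OF assms(3), of u] assms(1) that by (simp add: orthogonal_def)
  then have "orthogonal y x"
    using orthogonal_to_span[OF assms(2), of y] by (simp add: orthogonal_commute)
  then show ?thesis
    by (simp add: orthogonal_def inner_commute)
qed

lemma admissible_pair_frame_spans:
  fixes f :: "nat \<Rightarrow> real^'n"
  assumes n: "CARD('n) = 2 + m" and f: "orthonormal_frame f (2 + m)"
  shows "admissible_pair (span (f ` {..<2})) (span ((\<lambda>j. f (j + 2)) ` {..<m}))"
  unfolding admissible_pair_def
proof (intro conjI ballI)
  show "dim (span (f ` {..<2})) = 2"
    using f by (intro dim_span_orthonormal_frame orthonormal_frame_take2)
  show "dim (span ((\<lambda>j. f (j + 2)) ` {..<m})) = CARD('n) - 2"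
    using dim_span_orthonormal_frame[OF orthonormal_frame_drop2[OF f]] n by simp
  fix x y assume "x \<in> span (f ` {..<2})" "y \<in> span ((\<lambda>j. f (j + 2)) ` {..<m})"
  then show "inner x y = 0"
    by (rule inner_span_orthogonal[rotated]) (use f in \<open>auto simp: orthonormal_frame_def\<close>)
qed auto

lemma subspace_obtain_orthonormal_frame:
  fixes L :: "(real^'n) set"
  assumes "subspace L"
  obtains g where "orthonormal_frame g (dim L)" "span (g ` {..<dim L}) = L" "g ` {..<dim L} \<subseteq> L"
proof -
  obtain B where B: "B \<subseteq> L" "pairwise orthogonal B" "\<And>x. x \<in> B \<Longrightarrow> norm x = 1"
    "independent B" "card B = dim L" "span B = L"
    using orthonormal_basis_subspace[OF assms] by metis
  obtain h where h: "bij_betw h {..<dim L} B"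
    using ex_bij_betw_nat_finite[of B] B(4,5) by (auto simp: independent_imp_finite atLeast0LessThan)
  have "inner (h i) (h j) = (if i = j then 1 else 0)" if "i < dim L" "j < dim L" for i j
  proof (cases "i = j")
    case True
    then show ?thesis
      using B(3) h that by (simp add: bij_betw_apply power2_norm_eq_inner[symmetric])
  next
    case False
    then have "h i \<noteq> h j"
      using h that unfolding bij_betw_def inj_on_def by auto
    then show ?thesis
      using B(2) h that False by (auto simp: pairwise_def orthogonal_def bij_betw_apply)
  qed
  then have "orthonormal_frame h (dim L)"
    unfolding orthonormal_frame_def by blast
  moreover have "h ` {..<dim L} = B"
    using h by (simp add: bij_betw_def)
  ultimately show ?thesis
    using that B by auto
qed

lemma admissible_pair_obtain_frame:
  fixes L1 L2 :: "(real^'n) set"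
  assumes n: "CARD('n) = 2 + m" and L: "admissible_pair L1 L2"
  obtains f where "orthonormal_frame f (2 + m)" "L1 = span (f ` {..<2})" "L2 = span ((\<lambda>j. f (j + 2)) ` {..<m})"
proof -
  obtain g1 where g1: "orthonormal_frame g1 2" "span (g1 ` {..<2}) = L1" "g1 ` {..<2} \<subseteq> L1"
    using L subspace_obtain_orthonormal_frame[of L1] unfolding admissible_pair_def by metis
  obtain g2 where g2: "orthonormal_frame g2 m" "span (g2 ` {..<m}) = L2" "g2 ` {..<m} \<subseteq> L2"
    using L subspace_obtain_orthonormal_frame[of L2] n unfolding admissible_pair_def by (metis add_diff_cancel_left')
  have orth: "inner x y = 0" "inner y x = 0" if "x \<in> L1" "y \<in> L2" for x y
    using L that unfolding admissible_pair_def by (auto simp: inner_commute)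
  define f where "f k = (if k < 2 then g1 k else g2 (k - 2))" for k
  have "orthonormal_frame f (2 + m)"
    using g1(1,3) g2(1,3) orth unfolding orthonormal_frame_def f_def
    by (auto simp: subset_iff)
  moreover have "f ` {..<2} = g1 ` {..<2}" and "(\<lambda>j. f (j + 2)) ` {..<m} = g2 ` {..<m}"
    by (auto simp: f_def)
  ultimately show ?thesis
    using that g1 g2 by metis
qed

lemma continuous_on_sec_curv:
  assumes lag: "lagrangian_sff sff" and u: "continuous_on S u" and v: "continuous_on S v"
  shows "continuous_on S (\<lambda>x. sec_curv c sff (u x) (v x))"
proof -
  have "bounded_bilinear sff"
    using lagrangian_sff_bilinear[OF lag] by (rule bilinear_conv_bounded_bilinear[THEN iffD1])
  then have "continuous_on S (\<lambda>x. sff (u x) (v x))"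
    if "continuous_on S u" "continuous_on S v" for u v
    using bounded_bilinear.continuous_on that by blast
  then show ?thesis
    unfolding sec_curv_def using u v by (intro continuous_intros) auto
qed

text \<open>Orthonormal frames of the whole space, stored as matrix rows so that they form a compact set.\<close>

definition orthonormal_rows :: "(real^'n^'n) set" where
  "orthonormal_rows = {A. \<forall>i j. inner (A $ i) (A $ j) = (if i = j then 1 else 0)}"

lemma compact_orthonormal_rows: "compact (orthonormal_rows :: (real^'n^'n) set)"
proof (rule compact_eq_bounded_closed[THEN iffD2], rule conjI)
  have "norm A \<le> real CARD('n)" if "A \<in> orthonormal_rows" for A :: "real^'n^'n"
  proof -
    have "norm (A $ i) = 1" for i
      using that by (simp add: orthonormal_rows_def norm_eq_sqrt_inner)
    then show ?thesis
      using L2_set_le_sum[of UNIV "\<lambda>i. norm (A $ i)"] unfolding norm_vec_def by simp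
  qed
  then show "bounded (orthonormal_rows :: (real^'n^'n) set)"
    by (intro bounded_subset[OF bounded_cball[of 0 "real CARD('n)"]]) auto
  show "closed (orthonormal_rows :: (real^'n^'n) set)"
    unfolding orthonormal_rows_def by (intro closed_Collect_all closed_Collect_eq continuous_intros)
qed

lemma mixed_curv_attains_max:
  fixes sff :: "real^'n \<Rightarrow> real^'n \<Rightarrow> real^'n"
  assumes lag: "lagrangian_sff sff" and n: "CARD('n) = 2 + m"
  obtains f where "orthonormal_frame f (2 + m)"
    "\<And>g. orthonormal_frame g (2 + m) \<Longrightarrow> mixed_curv c sff g m \<le> mixed_curv c sff f m"
proof -
  obtain \<sigma> where \<sigma>: "bij_betw \<sigma> {..<2 + m} (UNIV :: 'n set)"
    using ex_bij_betw_nat_finite[of "UNIV :: 'n set"] n by (auto simp: atLeast0LessThan)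
  define frame_of where "frame_of A = (\<lambda>k. (A :: real^'n^'n) $ \<sigma> k)" for A
  have frame: "orthonormal_frame (frame_of A) (2 + m)" if "A \<in> orthonormal_rows" for A
    using that bij_betw_imp_inj_on[OF \<sigma>]
    unfolding orthonormal_frame_def orthonormal_rows_def frame_of_def inj_on_def by auto
  have "continuous_on orthonormal_rows (\<lambda>A. mixed_curv c sff (frame_of A) m)"
    unfolding mixed_curv_def frame_of_def
    by (intro continuous_on_sum continuous_on_sec_curv[OF lag] continuous_intros)
  moreover have "(\<chi> i. axis i 1) \<in> orthonormal_rows"
    by (simp add: orthonormal_rows_def inner_axis_axis)
  ultimately obtain A where A: "A \<in> orthonormal_rows"
    and max: "\<And>B. B \<in> orthonormal_rows \<Longrightarrow> mixed_curv c sff (frame_of B) m \<le> mixed_curv c sff (frame_of A) m"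
    using continuous_attains_sup[OF compact_orthonormal_rows] by blast
  show ?thesis
  proof (rule that[OF frame[OF A]])
    fix g :: "nat \<Rightarrow> real^'n" assume g: "orthonormal_frame g (2 + m)"
    define B where "B = (\<chi> i. g (inv_into {..<2 + m} \<sigma> i))"
    have B_row: "B $ \<sigma> k = g k" if "k < 2 + m" for k
      using that bij_betw_inv_into_left[OF \<sigma>] by (simp add: B_def)
    have "inv_into {..<2 + m} \<sigma> i < 2 + m" for i
      using bij_betw_apply[OF bij_betw_inv_into[OF \<sigma>]] by simp
    moreover have "inv_into {..<2 + m} \<sigma> i = inv_into {..<2 + m} \<sigma> j \<longleftrightarrow> i = j" for i j
      by (metis bij_betw_inv_into_right[OF \<sigma>] UNIV_I)
    ultimately have "B \<in> orthonormal_rows"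
      using g unfolding B_def orthonormal_rows_def orthonormal_frame_def by simp
    moreover have "mixed_curv c sff (frame_of B) m = mixed_curv c sff g m"
      unfolding mixed_curv_def frame_of_def by (simp add: B_row)
    ultimately show "mixed_curv c sff g m \<le> mixed_curv c sff (frame_of A) m"
      using max by metis
  qed
qed

lemma delta_2_nm2_eq_max_mixed_curv:
  fixes sff :: "real^'n \<Rightarrow> real^'n \<Rightarrow> real^'n"
  assumes lag: "lagrangian_sff sff" and n: "CARD('n) = 2 + m" and f: "orthonormal_frame f (2 + m)"
    and max: "\<And>g. orthonormal_frame g (2 + m) \<Longrightarrow> mixed_curv c sff g m \<le> mixed_curv c sff f m"
  shows "delta_2_nm2 c sff = mixed_curv c sff f m"
proof -
  let ?S = "{tau_sub c sff L1 + tau_sub c sff L2 | L1 L2. admissible_pair L1 L2}"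
  let ?U = "tau_sub c sff UNIV"
  have "?U - mixed_curv c sff f m \<in> ?S"
    using tau_sub_split_frame[OF lag n f, of c] admissible_pair_frame_spans[OF n f]
    by (intro CollectI exI conjI) (auto simp: algebra_simps)
  moreover have "?U - mixed_curv c sff f m \<le> t" if "t \<in> ?S" for t
  proof -
    obtain L1 L2 where t: "t = tau_sub c sff L1 + tau_sub c sff L2" and L: "admissible_pair L1 L2"
      using \<open>t \<in> ?S\<close> by blast
    obtain g where "orthonormal_frame g (2 + m)" "L1 = span (g ` {..<2})" "L2 = span ((\<lambda>j. g (j + 2)) ` {..<m})"
      using admissible_pair_obtain_frame[OF n L] by metis
    then show ?thesis
      using tau_sub_split_frame[OF lag n, of g c] max t by force
  qed
  ultimately have "Inf ?S = ?U - mixed_curv c sff f m"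
    by (rule cInf_eq_minimum)
  then show ?thesis
    by (simp add: delta_2_nm2_admissible_pairs)
qed

section \<open>The cubic form on the plane L1\<close>

text \<open>The coefficients h^r_ab of the paper, with all indices shifted down by one.\<close>

definition sff_coeff :: "(real^'n \<Rightarrow> real^'n \<Rightarrow> real^'n) \<Rightarrow> (nat \<Rightarrow> real^'n) \<Rightarrow> nat \<Rightarrow> nat \<Rightarrow> nat \<Rightarrow> real" where
  "sff_coeff sff e a b r = inner (sff (e a) (e b)) (e r)"

lemma sff_coeff_swap12: "lagrangian_sff sff \<Longrightarrow> sff_coeff sff e a b r = sff_coeff sff e b a r"
  by (simp add: sff_coeff_def lagrangian_sff_commute)

lemma sff_coeff_swap23: "lagrangian_sff sff \<Longrightarrow> sff_coeff sff e a b r = sff_coeff sff e a r b"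
  by (simp add: sff_coeff_def lagrangian_sff_inner_swap)

lemma lagrangian_cubic_form_plane:
  assumes lag: "lagrangian_sff sff"
  shows "inner (sff (x *\<^sub>R u + y *\<^sub>R v) (x *\<^sub>R u + y *\<^sub>R v)) (x *\<^sub>R u + y *\<^sub>R v)
    = inner (sff u u) u * x^3 + 3 * inner (sff u u) v * x^2 * y + 3 * inner (sff u v) v * x * y^2
      + inner (sff v v) v * y^3"
proof -
  have b: "bilinear sff"
    using lag by (rule lagrangian_sff_bilinear)
  have "inner (sff u v) u = inner (sff u u) v" "inner (sff v u) u = inner (sff u u) v"
    "inner (sff v v) u = inner (sff u v) v" "inner (sff v u) v = inner (sff u v) v"
    using lagrangian_sff_inner_swap[OF lag] lagrangian_sff_commute[OF lag] by metis+
  then show ?thesis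
    by (simp add: bilinear_ladd[OF b] bilinear_radd[OF b] bilinear_lmul[OF b] bilinear_rmul[OF b]
        inner_add_left inner_add_right power2_eq_square power3_eq_cube algebra_simps)
qed

lemma isCont_nonneg_at_0:
  fixes f :: "real \<Rightarrow> real"
  assumes "isCont f 0" and "\<And>s. 0 < s \<Longrightarrow> 0 \<le> f s"
  shows "0 \<le> f 0"
proof (rule tendsto_lowerbound)
  show "(f \<longlongrightarrow> f 0) (at_right 0)"
    using assms(1) by (simp add: isCont_def filterlim_at_split)
  show "\<forall>\<^sub>F s in at_right 0. 0 \<le> f s"
    using eventually_at_right_less[of "0::real"] by eventually_elim (use assms(2) in auto)
qed simp

text \<open>Evaluate the cubic at the point ((1-s^2)/(1+s^2), 2s/(1+s^2)) of the unit circle and clear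
  denominators.\<close>
lemma binary_cubic_max_rational_point:
  fixes \<gamma> \<beta> \<delta> \<epsilon> s :: real
  assumes max: "\<And>x y. x^2 + y^2 = 1 \<Longrightarrow> \<gamma>*x^3 + 3*\<beta>*x^2*y + 3*\<delta>*x*y^2 + \<epsilon>*y^3 \<le> \<gamma>"
  shows "0 \<le> s * (-6*\<beta> + (6*\<gamma>-12*\<delta>)* s + (12*\<beta>-8*\<epsilon>)* s^2 + 12*\<delta>* s^3 - 6*\<beta>* s^4 + 2*\<gamma>* s^5)"
proof -
  define N where "N = 1 + s^2"
  have N: "N > 0"
    unfolding N_def by (simp add: add_pos_nonneg)
  have "(1-s^2)^2 + (2* s)^2 = N^2"
    unfolding N_def by (simp add: power2_eq_square algebra_simps)
  then have "((1-s^2)/N)^2 + (2* s/N)^2 = 1"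
    using N by (simp add: power_divide flip: add_divide_distrib)
  then have "\<gamma>*((1-s^2)/N)^3 + 3*\<beta>*((1-s^2)/N)^2*(2* s/N) + 3*\<delta>*((1-s^2)/N)*(2* s/N)^2 + \<epsilon>*(2* s/N)^3 \<le> \<gamma>"
    by (rule max)
  also have "\<gamma>*((1-s^2)/N)^3 + 3*\<beta>*((1-s^2)/N)^2*(2* s/N) + 3*\<delta>*((1-s^2)/N)*(2* s/N)^2 + \<epsilon>*(2* s/N)^3
    = (\<gamma>*(1-s^2)^3 + 3*\<beta>*(1-s^2)^2*(2* s) + 3*\<delta>*(1-s^2)*(2* s)^2 + \<epsilon>*(2* s)^3) / N^3"
    using N by (simp add: power_divide add_divide_distrib power2_eq_square power3_eq_cube)
  finally have "\<gamma>*(1-s^2)^3 + 3*\<beta>*(1-s^2)^2*(2* s) + 3*\<delta>*(1-s^2)*(2* s)^2 + \<epsilon>*(2* s)^3 \<le> \<gamma> * N^3"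
    using N by (simp add: divide_le_eq)
  then show ?thesis
    unfolding N_def by (simp add: eval_nat_numeral algebra_simps)
qed

lemma binary_cubic_max_at_axis:
  fixes \<gamma> \<beta> \<delta> \<epsilon> :: real
  assumes max: "\<And>x y. x^2 + y^2 = 1 \<Longrightarrow> \<gamma>*x^3 + 3*\<beta>*x^2*y + 3*\<delta>*x*y^2 + \<epsilon>*y^3 \<le> \<gamma>"
  shows "\<beta> = 0" "0 \<le> \<gamma>" "2*\<delta> \<le> \<gamma>" "\<gamma> = 0 \<Longrightarrow> \<delta> = 0 \<and> \<epsilon> = 0"
proof -
  define q where "q s = -6*\<beta> + (6*\<gamma>-12*\<delta>)* s + (12*\<beta>-8*\<epsilon>)* s^2 + 12*\<delta>* s^3 - 6*\<beta>* s^4 + 2*\<gamma>* s^5" for s :: real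
  have sq: "0 \<le> s * q s" for s
    unfolding q_def by (rule binary_cubic_max_rational_point[OF max])
  have "isCont q 0" "isCont (\<lambda>s. - q (- s)) 0"
    unfolding q_def by (intro continuous_intros)+
  moreover have "0 \<le> q s" "0 \<le> - q (- s)" if "0 < s" for s
    using sq[of s] sq[of "-s"] that by (simp_all add: zero_le_mult_iff mult_le_0_iff)
  ultimately have "0 \<le> q 0" "0 \<le> - q (- 0)"
    using isCont_nonneg_at_0[of q] isCont_nonneg_at_0[of "\<lambda>s. - q (- s)"] by auto
  then show \<beta>: "\<beta> = 0"
    by (simp add: q_def)
  define r where "r s = (6*\<gamma>-12*\<delta>) - 8*\<epsilon>* s + 12*\<delta>* s^2 + 2*\<gamma>* s^4" for s :: real
  have "s * q s = s^2 * r s" for s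
    unfolding q_def r_def \<beta> by (simp add: eval_nat_numeral algebra_simps)
  then have "0 \<le> r s" if "0 < s" for s
    using sq[of s] that by (simp add: zero_le_mult_iff)
  moreover have "isCont r 0"
    unfolding r_def by (intro continuous_intros)
  ultimately have "0 \<le> r 0"
    using isCont_nonneg_at_0[of r] by blast
  then show "2*\<delta> \<le> \<gamma>"
    by (simp add: r_def)
  show "0 \<le> \<gamma>"
    using max[of "-1" 0] by simp
  assume "\<gamma> = 0"
  moreover have "\<epsilon> \<le> \<gamma>" "- \<epsilon> \<le> \<gamma>"
    using max[of 0 1] max[of 0 "-1"] by simp_all
  moreover have "\<gamma>*(3/5)^3 + 3*\<delta>*(3/5)*(4/5)^2 - \<epsilon>*(4/5)^3 \<le> \<gamma>"
    and "- \<gamma>*(3/5)^3 - 3*\<delta>*(3/5)*(4/5)^2 + \<epsilon>*(4/5)^3 \<le> \<gamma>"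
    using max[of "3/5" "-4/5"] max[of "-3/5" "4/5"] \<beta> by (simp_all add: power2_eq_square power3_eq_cube)
  ultimately show "\<delta> = 0 \<and> \<epsilon> = 0"
    by (simp add: power2_eq_square power3_eq_cube)
qed

definition rotate_frame :: "real \<Rightarrow> real \<Rightarrow> (nat \<Rightarrow> real^'n) \<Rightarrow> nat \<Rightarrow> real^'n" where
  "rotate_frame x y f k =
     (if k = 0 then x *\<^sub>R f 0 + y *\<^sub>R f 1 else if k = 1 then (- y) *\<^sub>R f 0 + x *\<^sub>R f 1 else f k)"

lemma rotate_frame_combination:
  "a *\<^sub>R rotate_frame x y f 0 + b *\<^sub>R rotate_frame x y f 1 = (a*x - b*y) *\<^sub>R f 0 + (a*y + b*x) *\<^sub>R f 1"
  by (simp add: rotate_frame_def algebra_simps scaleR_add_right)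

lemma orthonormal_frame_rotate_frame:
  assumes f: "orthonormal_frame f (2 + m)" and xy: "x^2 + y^2 = 1"
  shows "orthonormal_frame (rotate_frame x y f) (2 + m)"
  unfolding orthonormal_frame_def
proof (intro allI impI)
  fix i j assume ij: "i < 2 + m" "j < 2 + m"
  have f_inner: "inner (f k) (f l) = (if k = l then 1 else 0)" if "k < 2 + m" "l < 2 + m" for k l
    using f that unfolding orthonormal_frame_def by blast
  show "inner (rotate_frame x y f i) (rotate_frame x y f j) = (if i = j then 1 else 0)"
    using ij xy f_inner[of i j] f_inner[of 0 i] f_inner[of i 0] f_inner[of 1 i] f_inner[of i 1]
      f_inner[of 0 j] f_inner[of j 0] f_inner[of 1 j] f_inner[of j 1] f_inner[of 0 1] f_inner[of 1 0]
      f_inner[of 0 0] f_inner[of 1 1]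
    by (auto simp: rotate_frame_def inner_add_left inner_add_right power2_eq_square algebra_simps)
qed

lemma span_rotate_frame:
  assumes xy: "x^2 + y^2 = 1"
  shows "span (rotate_frame x y f ` {..<2}) = span (f ` {..<2})"
proof -
  have two: "{..<2::nat} = {0, 1}"
    by auto
  have f0: "f 0 = x *\<^sub>R rotate_frame x y f 0 + (- y) *\<^sub>R rotate_frame x y f 1"
    and f1: "f 1 = y *\<^sub>R rotate_frame x y f 0 + x *\<^sub>R rotate_frame x y f 1"
  proof -
    have "x * x - - y * y = 1" "x * y + - y * x = 0" "y * x - x * y = 0" "y * y + x * x = 1"
      using xy by (simp_all add: power2_eq_square algebra_simps)
    then show "f 0 = x *\<^sub>R rotate_frame x y f 0 + (- y) *\<^sub>R rotate_frame x y f 1"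
      and "f 1 = y *\<^sub>R rotate_frame x y f 0 + x *\<^sub>R rotate_frame x y f 1"
      by (simp_all only: rotate_frame_combination) simp_all
  qed
  have "f 0 \<in> span (rotate_frame x y f ` {0, 1})" "f 1 \<in> span (rotate_frame x y f ` {0, 1})"
    by (subst f0, intro span_add span_scale span_base; simp) (subst f1, intro span_add span_scale span_base; simp)
  then have "f ` {..<2} \<subseteq> span (rotate_frame x y f ` {..<2})"
    unfolding two by simp
  moreover have "x *\<^sub>R f 0 + y *\<^sub>R f 1 \<in> span (f ` {0, 1})" "(- y) *\<^sub>R f 0 + x *\<^sub>R f 1 \<in> span (f ` {0, 1})"
    by (intro span_add span_scale span_base; simp)+
  then have "rotate_frame x y f ` {..<2} \<subseteq> span (f ` {..<2})"
    unfolding two rotate_frame_def by simp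
  ultimately show ?thesis
    by (simp add: span_eq)
qed

lemma mixed_curv_rotate_frame:
  fixes f :: "nat \<Rightarrow> real^'n"
  assumes lag: "lagrangian_sff sff" and n: "CARD('n) = 2 + m" and f: "orthonormal_frame f (2 + m)"
    and xy: "x^2 + y^2 = 1"
  shows "mixed_curv c sff (rotate_frame x y f) m = mixed_curv c sff f m"
proof -
  have tail: "(\<lambda>j. rotate_frame x y f (j + 2)) = (\<lambda>j. f (j + 2))"
    by (simp add: rotate_frame_def)
  show ?thesis
    using tau_sub_split_frame[OF lag n f, of c]
      tau_sub_split_frame[OF lag n orthonormal_frame_rotate_frame[OF f xy], of c,
        unfolded span_rotate_frame[OF xy] tail]
    by linarith
qed

lemma rotate_frame_cubic_form_max:
  assumes lag: "lagrangian_sff sff" and f: "orthonormal_frame f (2 + m)"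
  obtains x y where "x^2 + y^2 = 1"
    "\<And>a b. a^2 + b^2 = 1 \<Longrightarrow>
       inner (sff (a *\<^sub>R rotate_frame x y f 0 + b *\<^sub>R rotate_frame x y f 1) (a *\<^sub>R rotate_frame x y f 0 + b *\<^sub>R rotate_frame x y f 1))
             (a *\<^sub>R rotate_frame x y f 0 + b *\<^sub>R rotate_frame x y f 1)
       \<le> inner (sff (rotate_frame x y f 0) (rotate_frame x y f 0)) (rotate_frame x y f 0)"
proof -
  define C where "C p = (let v = fst p *\<^sub>R f 0 + snd p *\<^sub>R f 1 in inner (sff v v) v)" for p :: "real \<times> real"
  have sphere: "(a, b) \<in> sphere 0 1 \<longleftrightarrow> a^2 + b^2 = 1" for a b :: real
    by (simp add: dist_norm norm_Pair)
  have "bounded_bilinear sff"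
    using lagrangian_sff_bilinear[OF lag] by (rule bilinear_conv_bounded_bilinear[THEN iffD1])
  then have "continuous_on (sphere 0 1) C"
    unfolding C_def Let_def by (intro continuous_intros bounded_bilinear.continuous_on[of sff]) auto
  moreover have "(1, 0) \<in> sphere (0::real \<times> real) 1"
    by (simp add: sphere)
  ultimately obtain p where p: "p \<in> sphere 0 1" and max: "\<And>q. q \<in> sphere 0 1 \<Longrightarrow> C q \<le> C p"
    using continuous_attains_sup[OF compact_sphere] by blast
  obtain x y where xy: "p = (x, y)"
    by fastforce
  show ?thesis
  proof (rule that)
    show "x^2 + y^2 = 1"
      using p xy sphere by simp
    fix a b :: real assume ab: "a^2 + b^2 = 1"
    have "(a*x - b*y)^2 + (a*y + b*x)^2 = (a^2 + b^2) * (x^2 + y^2)"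
      by (simp add: power2_eq_square algebra_simps)
    then have "(a*x - b*y, a*y + b*x) \<in> sphere 0 1"
      using ab \<open>x^2 + y^2 = 1\<close> sphere by simp
    then have "C (a*x - b*y, a*y + b*x) \<le> C (x, y)"
      using max xy by blast
    then show "inner (sff (a *\<^sub>R rotate_frame x y f 0 + b *\<^sub>R rotate_frame x y f 1) (a *\<^sub>R rotate_frame x y f 0 + b *\<^sub>R rotate_frame x y f 1))
             (a *\<^sub>R rotate_frame x y f 0 + b *\<^sub>R rotate_frame x y f 1)
       \<le> inner (sff (rotate_frame x y f 0) (rotate_frame x y f 0)) (rotate_frame x y f 0)"
      unfolding rotate_frame_combination by (simp add: C_def rotate_frame_def Let_def)
  qed
qed

lemma cubic_form_adapted_rotation:
  assumes lag: "lagrangian_sff sff" and f: "orthonormal_frame f (2 + m)"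
  obtains x y where "x^2 + y^2 = 1" "sff_coeff sff (rotate_frame x y f) 0 0 1 = 0"
    "0 \<le> sff_coeff sff (rotate_frame x y f) 0 0 0"
    "2 * sff_coeff sff (rotate_frame x y f) 0 1 1 \<le> sff_coeff sff (rotate_frame x y f) 0 0 0"
    "sff_coeff sff (rotate_frame x y f) 0 0 0 = 0 \<Longrightarrow>
       sff_coeff sff (rotate_frame x y f) 0 1 1 = 0 \<and> sff_coeff sff (rotate_frame x y f) 1 1 1 = 0"
proof -
  obtain x y where xy: "x^2 + y^2 = 1" and max: "\<And>a b. a^2 + b^2 = 1 \<Longrightarrow>
       inner (sff (a *\<^sub>R rotate_frame x y f 0 + b *\<^sub>R rotate_frame x y f 1) (a *\<^sub>R rotate_frame x y f 0 + b *\<^sub>R rotate_frame x y f 1))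
             (a *\<^sub>R rotate_frame x y f 0 + b *\<^sub>R rotate_frame x y f 1)
       \<le> inner (sff (rotate_frame x y f 0) (rotate_frame x y f 0)) (rotate_frame x y f 0)"
    using rotate_frame_cubic_form_max[OF lag f] by blast
  note cubic = binary_cubic_max_at_axis[OF max[unfolded lagrangian_cubic_form_plane[OF lag]]]
  show ?thesis
    using that[OF xy] cubic by (simp add: sff_coeff_def algebra_simps)
qed

section \<open>Chen's bound minus the mixed curvature as a sum of squares\<close>

text \<open>Indices 0 and 1 refer to the plane L1, indices j + 2 with j < m to its complement L2.\<close>

definition plane_trace :: "(nat \<Rightarrow> nat \<Rightarrow> nat \<Rightarrow> real) \<Rightarrow> nat \<Rightarrow> real" where
  "plane_trace T r = T 0 0 r + T 1 1 r"

definition complement_trace :: "nat \<Rightarrow> (nat \<Rightarrow> nat \<Rightarrow> nat \<Rightarrow> real) \<Rightarrow> nat \<Rightarrow> real" where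
  "complement_trace m T r = (\<Sum>l<m. T (l + 2) (l + 2) r)"

definition chen_defect :: "nat \<Rightarrow> (nat \<Rightarrow> nat \<Rightarrow> nat \<Rightarrow> real) \<Rightarrow> real" where
  "chen_defect m T = real m / (4 * (real m + 1)) * (\<Sum>r<2 + m. (plane_trace T r + complement_trace m T r)^2)
      - (\<Sum>a<2. \<Sum>j<m. \<Sum>r<2 + m. T a a r * T (j + 2) (j + 2) r - (T a (j + 2) r)^2)"

lemma mixed_cubic_sum_eq:
  fixes T :: "nat \<Rightarrow> nat \<Rightarrow> nat \<Rightarrow> real"
  assumes s1: "\<And>a b c. T a b c = T b a c" and s2: "\<And>a b c. T a b c = T a c b"
  shows "(\<Sum>a<2. \<Sum>j<m. \<Sum>r<2 + m. T a a r * T (j + 2) (j + 2) r - (T a (j + 2) r)^2)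
     = plane_trace T 0 * complement_trace m T 0 + plane_trace T 1 * complement_trace m T 1
       + (\<Sum>k<m. plane_trace T (k + 2) * complement_trace m T (k + 2))
       - (\<Sum>j<m. (T 0 0 (j + 2))^2 + 2 * (T 0 1 (j + 2))^2 + (T 1 1 (j + 2))^2)
       - (\<Sum>a<2. \<Sum>j<m. \<Sum>k<m. (T a (j + 2) (k + 2))^2)"
proof -
  have "T 0 (j + 2) 0 = T 0 0 (j + 2)" "T 0 (j + 2) 1 = T 0 1 (j + 2)" "T 1 (j + 2) 0 = T 0 1 (j + 2)"
    "T 1 (j + 2) 1 = T 1 1 (j + 2)" for j
    by (metis s1 s2)+
  then have row: "(\<Sum>a<2. \<Sum>r<2 + m. T a a r * T (j + 2) (j + 2) r - (T a (j + 2) r)^2)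
     = plane_trace T 0 * T (j + 2) (j + 2) 0 + plane_trace T 1 * T (j + 2) (j + 2) 1
       + (\<Sum>k<m. plane_trace T (k + 2) * T (j + 2) (j + 2) (k + 2))
       - ((T 0 0 (j + 2))^2 + 2 * (T 0 1 (j + 2))^2 + (T 1 1 (j + 2))^2)
       - (\<Sum>a<2. \<Sum>k<m. (T a (j + 2) (k + 2))^2)" for j
    unfolding plane_trace_def sum_lessThan_2_add sum_lessThan_2
    by (simp add: sum.distrib sum_subtractf algebra_simps)
  have "(\<Sum>a<2. \<Sum>j<m. \<Sum>r<2 + m. T a a r * T (j + 2) (j + 2) r - (T a (j + 2) r)^2)
      = (\<Sum>j<m. \<Sum>a<2. \<Sum>r<2 + m. T a a r * T (j + 2) (j + 2) r - (T a (j + 2) r)^2)"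
    by (rule sum.swap)
  also have "\<dots> = (\<Sum>j<m. plane_trace T 0 * T (j + 2) (j + 2) 0 + plane_trace T 1 * T (j + 2) (j + 2) 1
       + (\<Sum>k<m. plane_trace T (k + 2) * T (j + 2) (j + 2) (k + 2))
       - ((T 0 0 (j + 2))^2 + 2 * (T 0 1 (j + 2))^2 + (T 1 1 (j + 2))^2)
       - (\<Sum>a<2. \<Sum>k<m. (T a (j + 2) (k + 2))^2))"
    by (simp only: row)
  also have "\<dots> = plane_trace T 0 * complement_trace m T 0 + plane_trace T 1 * complement_trace m T 1
       + (\<Sum>j<m. \<Sum>k<m. plane_trace T (k + 2) * T (j + 2) (j + 2) (k + 2))
       - (\<Sum>j<m. (T 0 0 (j + 2))^2 + 2 * (T 0 1 (j + 2))^2 + (T 1 1 (j + 2))^2)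
       - (\<Sum>j<m. \<Sum>a<2. \<Sum>k<m. (T a (j + 2) (k + 2))^2)"
    by (simp add: complement_trace_def sum.distrib sum_subtractf sum_distrib_left)
  also have "(\<Sum>j<m. \<Sum>k<m. plane_trace T (k + 2) * T (j + 2) (j + 2) (k + 2))
      = (\<Sum>k<m. plane_trace T (k + 2) * complement_trace m T (k + 2))"
    by (subst sum.swap) (simp add: complement_trace_def sum_distrib_left)
  also have "(\<Sum>j<m. \<Sum>a<2. \<Sum>k<m. (T a (j + 2) (k + 2))^2) = (\<Sum>a<2. \<Sum>j<m. \<Sum>k<m. (T a (j + 2) (k + 2))^2)"
    by (rule sum.swap)
  finally show ?thesis .
qed

lemma sum_square_traceless_part:
  fixes x :: "nat \<Rightarrow> nat \<Rightarrow> real"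
  assumes "m > 0"
  shows "(\<Sum>j<m. \<Sum>k<m. (x j k)^2)
       = (\<Sum>j<m. \<Sum>k<m. (x j k - (if j = k then (\<Sum>l<m. x l l) / m else 0))^2) + (\<Sum>l<m. x l l)^2 / m"
proof -
  define t where "t = (\<Sum>l<m. x l l)"
  have "(x j k - (if j = k then t/m else 0))^2
      = (x j k)^2 - (if j = k then 2 * (x j k * (t/m)) else 0) + (if j = k then (t/m)^2 else 0)" for j k
    by (auto simp: power2_eq_square algebra_simps)
  then have "(\<Sum>j<m. \<Sum>k<m. (x j k - (if j = k then t/m else 0))^2)
     = (\<Sum>j<m. \<Sum>k<m. (x j k)^2) - 2 * (\<Sum>j<m. x j j * (t/m)) + (\<Sum>j<m. (t/m)^2)"
    by (simp add: sum.distrib sum_subtractf sum_distrib_left)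
  also have "(\<Sum>j<m. x j j * (t/m)) = t * t / m"
    by (simp only: sum_distrib_right[symmetric] t_def[symmetric]) simp
  also have "(\<Sum>j<m. (t/m)^2) = t * t / m"
    using assms by (simp add: power2_eq_square)
  finally show ?thesis
    unfolding t_def[symmetric] by (simp add: power2_eq_square)
qed

lemma quadratic_form_nonneg:
  fixes p q \<kappa> :: real
  assumes "1/6 < \<kappa>" and "\<kappa> < 1/2"
  shows "0 \<le> \<kappa> * (p + q)^2 - p * q + p^2 / 2"
    and "\<kappa> * (p + q)^2 - p * q + p^2 / 2 = 0 \<Longrightarrow> p = 0 \<and> q = 0"
proof -
  let ?X = "\<kappa> * (p + q)^2 - p * q + p^2 / 2"
  let ?S = "(2 * (\<kappa> + 1/2) * p + (2 * \<kappa> - 1) * q)^2"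
  have sos: "4 * (\<kappa> + 1/2) * ?X = ?S + (6 * \<kappa> - 1) * q^2"
    by (simp add: power2_eq_square algebra_simps)
  have S: "0 \<le> ?S" and Q: "0 \<le> (6 * \<kappa> - 1) * q^2"
    using assms by auto
  then have "0 \<le> 4 * (\<kappa> + 1/2) * ?X"
    unfolding sos by linarith
  then show "0 \<le> ?X"
    using assms by (simp add: zero_le_mult_iff)
  assume "?X = 0"
  then have "?S + (6 * \<kappa> - 1) * q^2 = 0"
    using sos by simp
  then have "?S = 0" and "(6 * \<kappa> - 1) * q^2 = 0"
    using S Q by linarith+
  then show "p = 0 \<and> q = 0"
    using assms by simp
qed

lemma chen_complete_square:
  fixes U W :: real
  assumes m: "0 < m"
  shows "real m / (4 * (real m + 1)) * (U + W)^2 - U * W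
    = real m / (4 * (real m + 1)) * (U - (real m + 2) / real m * W)^2 - W^2 / m"
proof -
  define \<kappa> where "\<kappa> = real m / (4 * (real m + 1))"
  define \<rho> where "\<rho> = (real m + 2) / real m"
  have "0 < real m * 4 + real m * (real m * 4)"
    using m by (simp add: add_pos_pos)
  then have coeffs: "\<kappa> * (1 + \<rho>) = 1/2" "1 - \<rho> = - 2 / m"
    using m by (simp_all add: \<kappa>_def \<rho>_def field_simps)
  have "\<kappa> * (U + W)^2 - \<kappa> * (U - \<rho> * W)^2 = (\<kappa> * (1 + \<rho>)) * W * (2 * U + (1 - \<rho>) * W)"
    by (simp add: power2_eq_square algebra_simps)
  also have "\<dots> = U * W - W^2 / m"
    unfolding coeffs by (simp add: power2_eq_square algebra_simps)
  finally show ?thesis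
    unfolding \<kappa>_def[symmetric] \<rho>_def[symmetric] by simp
qed

lemma chen_defect_sum_of_squares:
  fixes T :: "nat \<Rightarrow> nat \<Rightarrow> nat \<Rightarrow> real"
  assumes m: "0 < m" and s1: "\<And>a b c. T a b c = T b a c" and s2: "\<And>a b c. T a b c = T a c b"
  defines "\<kappa> \<equiv> real m / (4 * (real m + 1))" and "\<rho> \<equiv> (real m + 2) / real m"
  shows "chen_defect m T
     = \<kappa> * (plane_trace T 0 - \<rho> * complement_trace m T 0)^2 + \<kappa> * (plane_trace T 1 - \<rho> * complement_trace m T 1)^2
       + (\<Sum>k<m. \<kappa> * (plane_trace T (k + 2) + complement_trace m T (k + 2))^2
                 - plane_trace T (k + 2) * complement_trace m T (k + 2) + (plane_trace T (k + 2))^2 / 2)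
       + (\<Sum>j<m. (T 0 0 (j + 2) - T 1 1 (j + 2))^2 / 2 + 2 * (T 0 1 (j + 2))^2)
       + (\<Sum>a<2. \<Sum>j<m. \<Sum>k<m. (T a (j + 2) (k + 2) - (if j = k then complement_trace m T a / m else 0))^2)"
proof -
  let ?U = "plane_trace T" and ?W = "complement_trace m T"
  have complete_square: "\<kappa> * (?U b + ?W b)^2 - ?U b * ?W b = \<kappa> * (?U b - \<rho> * ?W b)^2 - (?W b)^2 / m" for b
    unfolding \<kappa>_def \<rho>_def by (rule chen_complete_square[OF m])
  have plane_squares: "(\<Sum>j<m. (T 0 0 (j + 2))^2 + 2 * (T 0 1 (j + 2))^2 + (T 1 1 (j + 2))^2)
      = (\<Sum>j<m. (T 0 0 (j + 2) - T 1 1 (j + 2))^2 / 2 + 2 * (T 0 1 (j + 2))^2) + (\<Sum>j<m. (?U (j + 2))^2 / 2)"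
  proof -
    have "(T 0 0 (j + 2))^2 + 2 * (T 0 1 (j + 2))^2 + (T 1 1 (j + 2))^2
        = ((T 0 0 (j + 2) - T 1 1 (j + 2))^2 / 2 + 2 * (T 0 1 (j + 2))^2) + (?U (j + 2))^2 / 2" for j
      by (simp add: plane_trace_def power2_eq_square field_simps)
    then show ?thesis
      unfolding sum.distrib[symmetric] by (rule sum.cong[OF refl])
  qed
  have trace: "(\<Sum>l<m. T a (l + 2) (l + 2)) = ?W a" for a
    unfolding complement_trace_def by (metis s1 s2)
  have traceless: "(\<Sum>j<m. \<Sum>k<m. (T a (j + 2) (k + 2))^2)
      = (\<Sum>j<m. \<Sum>k<m. (T a (j + 2) (k + 2) - (if j = k then ?W a / m else 0))^2) + (?W a)^2 / m" for a
    using sum_square_traceless_part[OF m, of "\<lambda>j k. T a (j + 2) (k + 2)"] by (simp only: trace)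
  have "chen_defect m T = \<kappa> * (\<Sum>r<2 + m. (?U r + ?W r)^2)
      - (\<Sum>a<2. \<Sum>j<m. \<Sum>r<2 + m. T a a r * T (j + 2) (j + 2) r - (T a (j + 2) r)^2)"
    by (simp only: chen_defect_def \<kappa>_def)
  also have "(\<Sum>r<2 + m. (?U r + ?W r)^2)
      = (?U 0 + ?W 0)^2 + (?U 1 + ?W 1)^2 + (\<Sum>k<m. (?U (k + 2) + ?W (k + 2))^2)"
    by (rule sum_lessThan_2_add)
  also have "(\<Sum>a<2. \<Sum>j<m. \<Sum>r<2 + m. T a a r * T (j + 2) (j + 2) r - (T a (j + 2) r)^2)
     = ?U 0 * ?W 0 + ?U 1 * ?W 1 + (\<Sum>k<m. ?U (k + 2) * ?W (k + 2))
       - (\<Sum>j<m. (T 0 0 (j + 2))^2 + 2 * (T 0 1 (j + 2))^2 + (T 1 1 (j + 2))^2)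
       - (\<Sum>a<2. \<Sum>j<m. \<Sum>k<m. (T a (j + 2) (k + 2))^2)"
    by (rule mixed_cubic_sum_eq[OF s1 s2])
  finally have "chen_defect m T = (\<kappa> * (?U 0 + ?W 0)^2 - ?U 0 * ?W 0) + (\<kappa> * (?U 1 + ?W 1)^2 - ?U 1 * ?W 1)
      + (\<Sum>k<m. \<kappa> * (?U (k + 2) + ?W (k + 2))^2 - ?U (k + 2) * ?W (k + 2))
      + (\<Sum>j<m. (T 0 0 (j + 2))^2 + 2 * (T 0 1 (j + 2))^2 + (T 1 1 (j + 2))^2)
      + (\<Sum>a<2. \<Sum>j<m. \<Sum>k<m. (T a (j + 2) (k + 2))^2)"
    by (simp add: sum_subtractf sum_distrib_left algebra_simps)
  then show ?thesis
    unfolding complete_square plane_squares sum_lessThan_2 traceless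
    by (simp add: sum.distrib sum_subtractf)
qed

lemma chen_defect_eq_0_summands:
  fixes T :: "nat \<Rightarrow> nat \<Rightarrow> nat \<Rightarrow> real"
  assumes m: "3 \<le> m" and s1: "\<And>a b c. T a b c = T b a c" and s2: "\<And>a b c. T a b c = T a c b"
    and zero: "chen_defect m T = 0"
  shows "plane_trace T 0 = (real m + 2) / m * complement_trace m T 0"
    and "plane_trace T 1 = (real m + 2) / m * complement_trace m T 1"
    and "k < m \<Longrightarrow> real m / (4 * (real m + 1)) * (plane_trace T (k + 2) + complement_trace m T (k + 2))^2
           - plane_trace T (k + 2) * complement_trace m T (k + 2) + (plane_trace T (k + 2))^2 / 2 = 0"
    and "j < m \<Longrightarrow> (T 0 0 (j + 2) - T 1 1 (j + 2))^2 / 2 + 2 * (T 0 1 (j + 2))^2 = 0"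
    and "a < 2 \<Longrightarrow> j < m \<Longrightarrow> k < m \<Longrightarrow>
           T a (j + 2) (k + 2) = (if j = k then complement_trace m T a / m else 0)"
proof -
  let ?U = "plane_trace T" and ?W = "complement_trace m T"
  define \<kappa> where "\<kappa> = real m / (4 * (real m + 1))"
  define \<rho> where "\<rho> = (real m + 2) / real m"
  have \<kappa>: "1/6 < \<kappa>" "\<kappa> < 1/2"
    using m by (simp_all add: \<kappa>_def field_simps)
  define Q where "Q k = \<kappa> * (?U (k + 2) + ?W (k + 2))^2 - ?U (k + 2) * ?W (k + 2) + (?U (k + 2))^2 / 2" for k
  define P where "P j = (T 0 0 (j + 2) - T 1 1 (j + 2))^2 / 2 + 2 * (T 0 1 (j + 2))^2" for j
  define R where "R a j k = (T a (j + 2) (k + 2) - (if j = k then ?W a / m else 0))^2" for a j k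
  have Q: "0 \<le> Q k" and P: "0 \<le> P j" and R: "0 \<le> R a j k" for k j a
    unfolding Q_def P_def R_def using quadratic_form_nonneg(1)[OF \<kappa>] by simp_all
  have R_sum: "0 \<le> (\<Sum>k<m. R a j k)" "0 \<le> (\<Sum>j<m. \<Sum>k<m. R a j k)" for a j
    using R by (simp_all add: sum_nonneg)
  have "0 \<le> \<kappa>"
    using \<kappa> by simp
  then have nonneg: "0 \<le> \<kappa> * (?U 0 - \<rho> * ?W 0)^2" "0 \<le> \<kappa> * (?U 1 - \<rho> * ?W 1)^2"
    "0 \<le> (\<Sum>k<m. Q k)" "0 \<le> (\<Sum>j<m. P j)" "0 \<le> (\<Sum>a<2. \<Sum>j<m. \<Sum>k<m. R a j k)"
    by (simp_all add: sum_nonneg Q P R_sum)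
  have "chen_defect m T = \<kappa> * (?U 0 - \<rho> * ?W 0)^2 + \<kappa> * (?U 1 - \<rho> * ?W 1)^2
      + (\<Sum>k<m. Q k) + (\<Sum>j<m. P j) + (\<Sum>a<2. \<Sum>j<m. \<Sum>k<m. R a j k)"
    unfolding \<kappa>_def \<rho>_def Q_def P_def R_def using m by (intro chen_defect_sum_of_squares s1 s2) simp
  then have "\<kappa> * (?U 0 - \<rho> * ?W 0)^2 = 0" "\<kappa> * (?U 1 - \<rho> * ?W 1)^2 = 0"
    and Q_sum: "(\<Sum>k<m. Q k) = 0" and P_sum: "(\<Sum>j<m. P j) = 0"
    and R_sum0: "(\<Sum>a<2. \<Sum>j<m. \<Sum>k<m. R a j k) = 0"
    using zero nonneg by linarith+
  then show "?U 0 = (real m + 2) / m * ?W 0" "?U 1 = (real m + 2) / m * ?W 1"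
    using \<kappa> by (simp_all add: \<rho>_def)
  show "real m / (4 * (real m + 1)) * (?U (k + 2) + ?W (k + 2))^2 - ?U (k + 2) * ?W (k + 2) + (?U (k + 2))^2 / 2 = 0"
    if "k < m"
    using Q_sum Q that unfolding \<kappa>_def[symmetric] Q_def[symmetric] by (simp add: sum_nonneg_eq_0_iff)
  show "(T 0 0 (j + 2) - T 1 1 (j + 2))^2 / 2 + 2 * (T 0 1 (j + 2))^2 = 0" if "j < m"
    using P_sum P that unfolding P_def[symmetric] by (simp add: sum_nonneg_eq_0_iff)
  have "(\<Sum>j<m. \<Sum>k<m. R a j k) = 0" if "a < 2" for a
    using R_sum0 R_sum that by (simp add: sum_nonneg_eq_0_iff)
  then have "R a j k = 0" if "a < 2" "j < m" "k < m" for a j k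
    using R_sum R that by (simp add: sum_nonneg_eq_0_iff)
  then show "T a (j + 2) (k + 2) = (if j = k then ?W a / m else 0)" if "a < 2" "j < m" "k < m"
    using that by (simp add: R_def)
qed

lemma chen_defect_eq_0_imp:
  fixes T :: "nat \<Rightarrow> nat \<Rightarrow> nat \<Rightarrow> real"
  assumes m: "3 \<le> m" and s1: "\<And>a b c. T a b c = T b a c" and s2: "\<And>a b c. T a b c = T a c b"
    and zero: "chen_defect m T = 0"
  shows "\<forall>k<m. T 0 0 (k + 2) = 0 \<and> T 1 1 (k + 2) = 0 \<and> T 0 1 (k + 2) = 0 \<and> complement_trace m T (k + 2) = 0"
    and "\<forall>a<2. \<forall>j<m. \<forall>k<m. T a (j + 2) (k + 2) = (if j = k then complement_trace m T a / m else 0)"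
    and "\<forall>b<2. plane_trace T b = (real m + 2) / m * complement_trace m T b"
proof -
  note Z = chen_defect_eq_0_summands[OF m s1 s2 zero]
  have \<kappa>: "1/6 < real m / (4 * (real m + 1))" "real m / (4 * (real m + 1)) < 1/2"
    using m by (simp_all add: field_simps)
  show "\<forall>k<m. T 0 0 (k + 2) = 0 \<and> T 1 1 (k + 2) = 0 \<and> T 0 1 (k + 2) = 0 \<and> complement_trace m T (k + 2) = 0"
  proof (intro allI impI)
    fix k assume k: "k < m"
    have "plane_trace T (k + 2) = 0" "complement_trace m T (k + 2) = 0"
      using quadratic_form_nonneg(2)[OF \<kappa> Z(3)[OF k]] by simp_all
    moreover have "(T 0 0 (k + 2) - T 1 1 (k + 2))^2 = 0" "(T 0 1 (k + 2))^2 = 0"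
      using Z(4)[OF k] zero_le_power2[of "T 0 0 (k + 2) - T 1 1 (k + 2)"] zero_le_power2[of "T 0 1 (k + 2)"]
      by linarith+
    ultimately show "T 0 0 (k + 2) = 0 \<and> T 1 1 (k + 2) = 0 \<and> T 0 1 (k + 2) = 0 \<and> complement_trace m T (k + 2) = 0"
      by (simp add: plane_trace_def)
  qed
  show "\<forall>a<2. \<forall>j<m. \<forall>k<m. T a (j + 2) (k + 2) = (if j = k then complement_trace m T a / m else 0)"
    using Z(5) by blast
  show "\<forall>b<2. plane_trace T b = (real m + 2) / m * complement_trace m T b"
    using Z(1,2) by (simp add: less_2_cases_iff)
qed

lemma inner_orthonormal_frame_UNIV:
  fixes f :: "nat \<Rightarrow> real^'n"
  assumes n: "CARD('n) = N" and f: "orthonormal_frame f N"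
  shows "inner v w = (\<Sum>r<N. inner v (f r) * inner w (f r))"
proof -
  have "v \<in> span (f ` {..<N})"
    using span_orthonormal_frame_UNIV[of f] f n by simp
  then show ?thesis
    by (rule orthonormal_frame_inner[OF f])
qed

lemma mean_curv_orthonormal_frame:
  fixes f :: "nat \<Rightarrow> real^'n" and sff :: "real^'n \<Rightarrow> real^'n \<Rightarrow> real^'n"
  assumes lag: "lagrangian_sff sff" and f: "orthonormal_frame f CARD('n)"
  shows "mean_curv sff = (1 / real CARD('n)) *\<^sub>R (\<Sum>i<CARD('n). sff (f i) (f i))"
proof -
  obtain \<sigma> where \<sigma>: "bij_betw \<sigma> {..<CARD('n)} (UNIV :: 'n set)"
    using ex_bij_betw_nat_finite[of "UNIV :: 'n set"] by (auto simp: atLeast0LessThan)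
  define g where "g k = (axis (\<sigma> k) 1 :: real^'n)" for k
  have g: "orthonormal_frame g CARD('n)"
    using bij_betw_imp_inj_on[OF \<sigma>] unfolding orthonormal_frame_def g_def inj_on_def
    by (auto simp: inner_axis_axis)
  have "(\<Sum>i\<in>UNIV. sff (axis i 1) (axis i 1)) = (\<Sum>k<CARD('n). sff (g k) (g k))"
    unfolding g_def using sum.reindex_bij_betw[OF \<sigma>, of "\<lambda>i. sff (axis i 1) (axis i 1)"] by simp
  also have "\<dots> = (\<Sum>i<CARD('n). sff (f i) (f i))"
    using bilinear_trace_orthonormal_frame[OF lagrangian_sff_bilinear[OF lag] g f]
      span_orthonormal_frame_UNIV[OF f] span_orthonormal_frame_UNIV[OF g] by simp
  finally show ?thesis
    unfolding mean_curv_def by simp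
qed

lemma chen_bound_minus_mixed_curv:
  fixes f :: "nat \<Rightarrow> real^'n" and sff :: "real^'n \<Rightarrow> real^'n \<Rightarrow> real^'n"
  assumes lag: "lagrangian_sff sff" and n: "CARD('n) = 2 + m" and f: "orthonormal_frame f (2 + m)"
  shows "(real CARD('n))^2 * (real CARD('n) - 2) / (4 * (real CARD('n) - 1))
         * inner (mean_curv sff) (mean_curv sff) + 2 * (real CARD('n) - 2) * c - mixed_curv c sff f m
       = chen_defect m (sff_coeff sff f)"
proof -
  let ?T = "sff_coeff sff f"
  note expand = inner_orthonormal_frame_UNIV[OF n f]
  have trace: "(\<Sum>i<2 + m. ?T i i r) = plane_trace ?T r + complement_trace m ?T r" for r
    unfolding plane_trace_def complement_trace_def sum_lessThan_2_add by simp
  have "inner (mean_curv sff) (mean_curv sff) = (\<Sum>r<CARD('n). (\<Sum>i<CARD('n). ?T i i r)^2) / (real CARD('n))^2"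
    unfolding mean_curv_orthonormal_frame[OF lag f[folded n]] sff_coeff_def
    by (subst inner_orthonormal_frame_UNIV[OF refl f[folded n]])
      (simp add: inner_sum_left power2_eq_square times_divide_times_eq flip: sum_divide_distrib)
  then have H: "inner (mean_curv sff) (mean_curv sff)
      = (\<Sum>r<2 + m. (plane_trace ?T r + complement_trace m ?T r)^2) / (real (2 + m))^2"
    unfolding n trace .
  have sec: "sec_curv c sff (f a) (f b) = c + (\<Sum>r<2 + m. ?T a a r * ?T b b r - (?T a b r)^2)" for a b
  proof -
    have A: "inner (sff (f a) (f a)) (sff (f b) (f b)) = (\<Sum>r<2 + m. ?T a a r * ?T b b r)"
      unfolding sff_coeff_def by (rule expand)
    have B: "(norm (sff (f a) (f b)))^2 = (\<Sum>r<2 + m. (?T a b r)^2)"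
      unfolding power2_norm_eq_inner unfolding sff_coeff_def power2_eq_square by (rule expand)
    show ?thesis
      unfolding sec_curv_def sum_subtractf by (simp only: A B add_diff_eq)
  qed
  have M: "mixed_curv c sff f m = 2 * real m * c
      + (\<Sum>a<2. \<Sum>j<m. \<Sum>r<2 + m. ?T a a r * ?T (j + 2) (j + 2) r - (?T a (j + 2) r)^2)"
    unfolding mixed_curv_def sec sum.distrib by simp
  have "(real (2 + m))^2 * (real (2 + m) - 2) / (4 * (real (2 + m) - 1)) / (real (2 + m))^2
      = real m / (4 * (real m + 1))"
    by (simp add: of_nat_add)
  then have "(real (2 + m))^2 * (real (2 + m) - 2) / (4 * (real (2 + m) - 1)) * (S / (real (2 + m))^2)
      + 2 * (real (2 + m) - 2) * c - (2 * real m * c + M) = real m / (4 * (real m + 1)) * S - M" for S M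
    by (simp add: algebra_simps)
  then show ?thesis
    unfolding n H M chen_defect_def .
qed

section \<open>The normal form at a point of equality\<close>

lemma equality_adapted_frame:
  fixes sff :: "real^'n \<Rightarrow> real^'n \<Rightarrow> real^'n"
  assumes lag: "lagrangian_sff sff" and n: "CARD('n) = 2 + m"
    and eq: "delta_2_nm2 c sff =
       (real CARD('n))^2 * (real CARD('n) - 2) / (4 * (real CARD('n) - 1))
         * inner (mean_curv sff) (mean_curv sff) + 2 * (real CARD('n) - 2) * c"
  obtains e where "orthonormal_frame e (2 + m)" "chen_defect m (sff_coeff sff e) = 0"
    "sff_coeff sff e 0 0 1 = 0" "0 \<le> sff_coeff sff e 0 0 0" "2 * sff_coeff sff e 0 1 1 \<le> sff_coeff sff e 0 0 0"
    "sff_coeff sff e 0 0 0 = 0 \<Longrightarrow> sff_coeff sff e 0 1 1 = 0 \<and> sff_coeff sff e 1 1 1 = 0"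
proof -
  obtain f where f: "orthonormal_frame f (2 + m)"
    and max: "\<And>g. orthonormal_frame g (2 + m) \<Longrightarrow> mixed_curv c sff g m \<le> mixed_curv c sff f m"
    using mixed_curv_attains_max[OF lag n] by blast
  obtain x y where xy: "x^2 + y^2 = 1"
    and cubic: "sff_coeff sff (rotate_frame x y f) 0 0 1 = 0" "0 \<le> sff_coeff sff (rotate_frame x y f) 0 0 0"
      "2 * sff_coeff sff (rotate_frame x y f) 0 1 1 \<le> sff_coeff sff (rotate_frame x y f) 0 0 0"
      "sff_coeff sff (rotate_frame x y f) 0 0 0 = 0 \<Longrightarrow>
         sff_coeff sff (rotate_frame x y f) 0 1 1 = 0 \<and> sff_coeff sff (rotate_frame x y f) 1 1 1 = 0"
    using cubic_form_adapted_rotation[OF lag f] by blast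
  note e = orthonormal_frame_rotate_frame[OF f xy]
  have "delta_2_nm2 c sff = mixed_curv c sff (rotate_frame x y f) m"
    using delta_2_nm2_eq_max_mixed_curv[OF lag n f max] mixed_curv_rotate_frame[OF lag n f xy] by simp
  then have "chen_defect m (sff_coeff sff (rotate_frame x y f)) = 0"
    using chen_bound_minus_mixed_curv[OF lag n e, of c] eq by simp
  then show ?thesis
    using that[OF e] cubic by blast
qed

lemma adapted_frame_coefficients:
  fixes h :: "nat \<Rightarrow> nat \<Rightarrow> nat \<Rightarrow> real"
  assumes N: "N = 2 + m" and m: "3 \<le> m" and s1: "\<And>a b c. h a b c = h b a c" and s2: "\<And>a b c. h a b c = h a c b"
    and defect: "chen_defect m h = 0" and h001: "h 0 0 1 = 0"
  shows "real N * (complement_trace m h 0 / m) = h 0 0 0 + h 0 1 1"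
    and "real N * (complement_trace m h 1 / m) = h 1 1 1"
    and "i \<in> {2..<N} \<Longrightarrow> h 0 0 i = 0 \<and> h 1 1 i = 0 \<and> h 0 1 i = 0 \<and> complement_trace m h i = 0"
    and "a < 2 \<Longrightarrow> i \<in> {2..<N} \<Longrightarrow> j \<in> {2..<N} \<Longrightarrow>
           h a i j = (if i = j then complement_trace m h a / m else 0)"
proof -
  note E = chen_defect_eq_0_imp[OF m s1 s2 defect]
  have "h 0 0 0 + h 1 1 0 = (real m + 2) * (complement_trace m h 0 / m)"
    "h 0 0 1 + h 1 1 1 = (real m + 2) * (complement_trace m h 1 / m)"
    using E(3) m unfolding plane_trace_def by auto
  moreover have "h 1 1 0 = h 0 1 1" "h 0 0 1 = h 0 1 0"
    by (metis s1 s2)+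
  ultimately show "real N * (complement_trace m h 0 / m) = h 0 0 0 + h 0 1 1"
    and "real N * (complement_trace m h 1 / m) = h 1 1 1"
    using h001 N by (simp_all add: algebra_simps)
  have L2: "\<exists>j<m. i = j + 2" if "i \<in> {2..<N}" for i
    using that N by (intro exI[of _ "i - 2"]) auto
  show "h 0 0 i = 0 \<and> h 1 1 i = 0 \<and> h 0 1 i = 0 \<and> complement_trace m h i = 0" if "i \<in> {2..<N}"
    using E(1) L2[OF that] by auto
  show "h a i j = (if i = j then complement_trace m h a / m else 0)"
    if a: "a < 2" and i: "i \<in> {2..<N}" and j: "j \<in> {2..<N}"
  proof -
    obtain p q where "p < m" "i = p + 2" "q < m" "j = q + 2"
      using L2[OF i] L2[OF j] by blast
    then show ?thesis
      using E(2) a by simp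
  qed
qed

lemma adapted_frame_normal_form:
  fixes e :: "nat \<Rightarrow> real^'n" and sff :: "real^'n \<Rightarrow> real^'n \<Rightarrow> real^'n"
  defines "h \<equiv> sff_coeff sff e"
  assumes lag: "lagrangian_sff sff" and n: "CARD('n) = 2 + m" and m: "3 \<le> m"
    and e: "orthonormal_frame e (2 + m)" and defect: "chen_defect m h = 0" and h001: "h 0 0 1 = 0"
  defines "lam \<equiv> complement_trace m h 0 / m" and "mu \<equiv> complement_trace m h 1 / m"
  shows "real CARD('n) * lam = h 0 0 0 + h 0 1 1" and "real CARD('n) * mu = h 1 1 1"
    and "sff (e 0) (e 0) = h 0 0 0 *\<^sub>R e 0"
    and "sff (e 0) (e 1) = h 0 1 1 *\<^sub>R e 1"
    and "sff (e 1) (e 1) = h 0 1 1 *\<^sub>R e 0 + h 1 1 1 *\<^sub>R e 1"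
    and "\<And>i. i \<in> {2..<CARD('n)} \<Longrightarrow> sff (e 0) (e i) = lam *\<^sub>R e i \<and> sff (e 1) (e i) = mu *\<^sub>R e i"
    and "\<And>i j. i \<in> {2..<CARD('n)} \<Longrightarrow> j \<in> {2..<CARD('n)} \<Longrightarrow>
           sff (e i) (e j) = (if i = j then 1 else 0) *\<^sub>R (lam *\<^sub>R e 0 + mu *\<^sub>R e 1)
             + (\<Sum>k\<in>{2..<CARD('n)}. h i j k *\<^sub>R e k)"
    and "\<And>k. k \<in> {2..<CARD('n)} \<Longrightarrow> (\<Sum>i\<in>{2..<CARD('n)}. h i i k) = 0"
proof -
  have s1: "h a b r = h b a r" and s2: "h a b r = h a r b" for a b r
    unfolding h_def using sff_coeff_swap12[OF lag] sff_coeff_swap23[OF lag] by blast+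
  note coeffs = adapted_frame_coefficients[OF n m s1 s2 defect h001, folded lam_def mu_def]
  show "real CARD('n) * lam = h 0 0 0 + h 0 1 1" and "real CARD('n) * mu = h 1 1 1"
    by (fact coeffs(1,2))+
  have "sff (e a) (e b) \<in> span (e ` {..<2 + m})" for a b
    using span_orthonormal_frame_UNIV[OF e[folded n]] unfolding n by simp
  then have "sff (e a) (e b) = (\<Sum>r<2 + m. h a b r *\<^sub>R e r)" for a b
    unfolding h_def sff_coeff_def by (rule orthonormal_frame_expansion[OF e])
  then have expand: "sff (e a) (e b) = h a b 0 *\<^sub>R e 0 + h a b 1 *\<^sub>R e 1 + (\<Sum>k\<in>{2..<CARD('n)}. h a b k *\<^sub>R e k)"
    for a b
    unfolding sum_lessThan_2_add n sum_lessThan_shift2[symmetric] .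
  have sum_0: "(\<Sum>k\<in>{2..<CARD('n)}. h a b k *\<^sub>R e k) = 0"
    if "\<And>k. k \<in> {2..<CARD('n)} \<Longrightarrow> h a b k = 0" for a b
    using that by simp
  have "h 1 1 0 = h 0 1 1" "h 0 1 0 = 0"
    using h001 by (metis s1 s2)+
  then show "sff (e 0) (e 0) = h 0 0 0 *\<^sub>R e 0" "sff (e 0) (e 1) = h 0 1 1 *\<^sub>R e 1"
    "sff (e 1) (e 1) = h 0 1 1 *\<^sub>R e 0 + h 1 1 1 *\<^sub>R e 1"
    using expand[of 0 0] expand[of 0 1] expand[of 1 1] coeffs(3) h001
    by (simp_all add: sum_0)
  show "sff (e 0) (e i) = lam *\<^sub>R e i \<and> sff (e 1) (e i) = mu *\<^sub>R e i" if i: "i \<in> {2..<CARD('n)}" for i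
  proof -
    have "h 0 i 0 = 0" "h 0 i 1 = 0" "h 1 i 0 = 0" "h 1 i 1 = 0"
      using coeffs(3)[OF i] by (metis s1 s2)+
    moreover have "(\<Sum>k\<in>{2..<CARD('n)}. h a i k *\<^sub>R e k) = (complement_trace m h a / m) *\<^sub>R e i" if "a < 2" for a
    proof -
      have "(\<Sum>k\<in>{2..<CARD('n)}. h a i k *\<^sub>R e k)
          = (\<Sum>k\<in>{2..<CARD('n)}. (if i = k then complement_trace m h a / m else 0) *\<^sub>R e k)"
        using coeffs(4)[OF that i] by (intro sum.cong) auto
      then show ?thesis
        using i by (simp add: sum_delta_scaleR)
    qed
    ultimately show ?thesis
      using expand[of 0 i] expand[of 1 i] by (simp add: lam_def mu_def)
  qed
  show "sff (e i) (e j) = (if i = j then 1 else 0) *\<^sub>R (lam *\<^sub>R e 0 + mu *\<^sub>R e 1)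
      + (\<Sum>k\<in>{2..<CARD('n)}. h i j k *\<^sub>R e k)"
    if i: "i \<in> {2..<CARD('n)}" and j: "j \<in> {2..<CARD('n)}" for i j
  proof -
    have "h i j 0 = h 0 i j" "h i j 1 = h 1 i j"
      by (metis s1 s2)+
    then show ?thesis
      using expand[of i j] coeffs(4)[OF _ i j] by (simp add: lam_def mu_def)
  qed
  show "(\<Sum>i\<in>{2..<CARD('n)}. h i i k) = 0" if "k \<in> {2..<CARD('n)}" for k
    using coeffs(3)[OF that] unfolding complement_trace_def n sum_lessThan_shift2[symmetric] by simp
qed

lemma normal_form_coefficient_bounds:
  fixes n \<gamma> \<delta> \<epsilon> lam mu :: real
  assumes n: "0 < n" and lam: "n * lam = \<gamma> + \<delta>" and mu: "n * mu = \<epsilon>"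
    and "0 \<le> \<gamma>" and "2 * \<delta> \<le> \<gamma>" and "\<gamma> = 0 \<Longrightarrow> \<delta> = 0 \<and> \<epsilon> = 0"
  shows "2 * n / 3 * lam \<le> \<gamma>" and "\<gamma> = 0 \<Longrightarrow> lam = 0 \<and> mu = 0" and "0 < \<gamma> \<Longrightarrow> n / 2 * lam < \<gamma>"
  using assms by (simp_all add: field_simps)

theorem lemma3p1:
  fixes sff :: "real^'n \<Rightarrow> real^'n \<Rightarrow> real^'n" and c :: real
  assumes n5: "CARD('n) \<ge> 5"
    and lag: "lagrangian_sff sff"
    and eq: "delta_2_nm2 c sff =
       (real CARD('n))^2 * (real CARD('n) - 2) / (4 * (real CARD('n) - 1))
         * inner (mean_curv sff) (mean_curv sff) + 2 * (real CARD('n) - 2) * c"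
  shows "\<exists>(e :: nat \<Rightarrow> real^'n) (gam::real) (lam::real) (mu::real) (hk :: nat \<Rightarrow> nat \<Rightarrow> nat \<Rightarrow> real).
    (\<forall>i\<in>{1..CARD('n)}. \<forall>j\<in>{1..CARD('n)}. inner (e i) (e j) = (if i = j then 1 else 0))
    \<and> sff (e 1) (e 1) = gam *\<^sub>R e 1
    \<and> sff (e 1) (e 2) = (real CARD('n) * lam - gam) *\<^sub>R e 2
    \<and> sff (e 2) (e 2) = (real CARD('n) * lam - gam) *\<^sub>R e 1 + (real CARD('n) * mu) *\<^sub>R e 2
    \<and> (\<forall>i\<in>{3..CARD('n)}. sff (e 1) (e i) = lam *\<^sub>R e i \<and> sff (e 2) (e i) = mu *\<^sub>R e i)
    \<and> (\<forall>i\<in>{3..CARD('n)}. \<forall>j\<in>{3..CARD('n)}.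
          sff (e i) (e j) = (if i = j then 1 else 0) *\<^sub>R (lam *\<^sub>R e 1 + mu *\<^sub>R e 2)
                            + (\<Sum>k=3..CARD('n). hk i j k *\<^sub>R e k))
    \<and> (\<forall>i\<in>{3..CARD('n)}. \<forall>j\<in>{3..CARD('n)}. \<forall>k\<in>{3..CARD('n)}.
          hk i j k = hk j i k \<and> hk i j k = hk i k j)
    \<and> (\<forall>k\<in>{3..CARD('n)}. (\<Sum>i=3..CARD('n). hk i i k) = 0)
    \<and> gam \<ge> 0 \<and> gam \<ge> 2 * real CARD('n) / 3 * lam
    \<and> (gam = 0 \<longrightarrow> lam = 0 \<and> mu = 0)
    \<and> (gam > 0 \<longrightarrow> gam > real CARD('n) / 2 * lam)"
proof -
  define m where "m = CARD('n) - 2"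
  have n: "CARD('n) = 2 + m" and m: "3 \<le> m"
    using n5 by (simp_all add: m_def)
  obtain e where e: "orthonormal_frame e (2 + m)" and defect: "chen_defect m (sff_coeff sff e) = 0"
    and h001: "sff_coeff sff e 0 0 1 = 0" and cubic: "0 \<le> sff_coeff sff e 0 0 0"
      "2 * sff_coeff sff e 0 1 1 \<le> sff_coeff sff e 0 0 0"
      "sff_coeff sff e 0 0 0 = 0 \<Longrightarrow> sff_coeff sff e 0 1 1 = 0 \<and> sff_coeff sff e 1 1 1 = 0"
    using equality_adapted_frame[OF lag n eq] by blast
  define lam where "lam = complement_trace m (sff_coeff sff e) 0 / m"
  define mu where "mu = complement_trace m (sff_coeff sff e) 1 / m"
  note nf = adapted_frame_normal_form[OF lag n m e defect h001, folded lam_def mu_def]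
  have "0 < real CARD('n)"
    by simp
  note bounds = normal_form_coefficient_bounds[OF this nf(1,2) cubic]
  define e' where "e' i = e (i - 1)" for i
  have index: "i - 1 \<in> {2..<CARD('n)}" if "i \<in> {3..CARD('n)}" for i
    using that by auto
  show ?thesis
  proof (rule exI[of _ e'], rule exI[of _ "sff_coeff sff e 0 0 0"], rule exI[of _ lam], rule exI[of _ mu],
      rule exI[of _ "sff_coeff sff e'"], intro conjI ballI impI)
    show "inner (e' i) (e' j) = (if i = j then 1 else 0)" if "i \<in> {1..CARD('n)}" "j \<in> {1..CARD('n)}" for i j
      using e that n unfolding orthonormal_frame_def e'_def by (auto simp: diff_eq_eq)
    show "sff (e' 1) (e' 1) = sff_coeff sff e 0 0 0 *\<^sub>R e' 1"
      "sff (e' 1) (e' 2) = (real CARD('n) * lam - sff_coeff sff e 0 0 0) *\<^sub>R e' 2"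
      "sff (e' 2) (e' 2) = (real CARD('n) * lam - sff_coeff sff e 0 0 0) *\<^sub>R e' 1 + (real CARD('n) * mu) *\<^sub>R e' 2"
      using nf(1-5) by (simp_all add: e'_def)
    show "sff (e' 1) (e' i) = lam *\<^sub>R e' i" "sff (e' 2) (e' i) = mu *\<^sub>R e' i" if "i \<in> {3..CARD('n)}" for i
      using nf(6)[OF index[OF that]] by (simp_all add: e'_def)
    show "sff (e' i) (e' j) = (if i = j then 1 else 0) *\<^sub>R (lam *\<^sub>R e' 1 + mu *\<^sub>R e' 2)
        + (\<Sum>k=3..CARD('n). sff_coeff sff e' i j k *\<^sub>R e' k)" if "i \<in> {3..CARD('n)}" "j \<in> {3..CARD('n)}" for i j
    proof -
      have "i - 1 = j - 1 \<longleftrightarrow> i = j"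
        using that by auto
      then show ?thesis
        using nf(7)[OF index[OF that(1)] index[OF that(2)]] by (simp add: sum_atLeastAtMost_3_shift e'_def sff_coeff_def)
    qed
    show "sff_coeff sff e' i j k = sff_coeff sff e' j i k" "sff_coeff sff e' i j k = sff_coeff sff e' i k j" for i j k
      using sff_coeff_swap12[OF lag] sff_coeff_swap23[OF lag] by blast+
    show "(\<Sum>i=3..CARD('n). sff_coeff sff e' i i k) = 0" if "k \<in> {3..CARD('n)}" for k
      using nf(8)[OF index[OF that]] by (simp add: sum_atLeastAtMost_3_shift e'_def sff_coeff_def)
    show "0 \<le> sff_coeff sff e 0 0 0"
      by (rule cubic(1))
    show "2 * real CARD('n) / 3 * lam \<le> sff_coeff sff e 0 0 0"
      by (rule bounds(1))
    show "lam = 0" and "mu = 0" if "sff_coeff sff e 0 0 0 = 0"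
      using bounds(2) that by blast+
    show "real CARD('n) / 2 * lam < sff_coeff sff e 0 0 0" if "0 < sff_coeff sff e 0 0 0"
      using bounds(3) that by blast
  qed
qed

end
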